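(* Let $G$ be a graph (possibly infinite) and $M$ a matching in $G$. Then $M$ has maximal support (i.e. there is no matching $N$ in $G$ with $supp(N)\supsetneq supp(M)$) if and only if there exists no finitely improving and no infinitely improving $M$-alternating path in $G$.
   Context: The support $supp(M)$ of a matching $M$ is the set of vertices incident with an edge of $M$. A path is $M$-alternating if of any two consecutive edges on it exactly one lies in $M$. An $M$-alternating path is finitely improving if it is finite, has at least one edge, and both its endpoints lie outside $supp(M)$. It is infinitely improving if it is a one-way infinite path (a ray, with exactly one endpoint) whose endpoint does not belong to $supp(M)$. *)

theory Defs
  imports Main
begin

definition graph :: "'a set set \<Rightarrow> bool" where
  "graph E \<longleftrightarrow> (\<forall>e\<in>E. \<exists>u v. u \<noteq> v \<and> e = {u, v})"

definition matching :: "'a set set \<Rightarrow> 'a set set \<Rightarrow> bool" where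
  "matching E M \<longleftrightarrow> M \<subseteq> E \<and> (\<forall>e\<in>M. \<forall>f\<in>M. e \<noteq> f \<longrightarrow> e \<inter> f = {})"

definition supp :: "'a set set \<Rightarrow> 'a set" where
  "supp M = \<Union>M"

definition max_support :: "'a set set \<Rightarrow> 'a set set \<Rightarrow> bool" where
  "max_support E M \<longleftrightarrow> \<not> (\<exists>N. matching E N \<and> supp M \<subset> supp N)"

definition fpath :: "'a set set \<Rightarrow> 'a list \<Rightarrow> bool" where
  "fpath E p \<longleftrightarrow> p \<noteq> [] \<and> distinct p \<and> (\<forall>i. Suc i < length p \<longrightarrow> {p ! i, p ! Suc i} \<in> E)"

definition alt_fpath :: "'a set set \<Rightarrow> 'a list \<Rightarrow> bool" where
  "alt_fpath M p \<longleftrightarrow> (\<forall>i. Suc (Suc i) < length p \<longrightarrow>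
      ({p ! i, p ! Suc i} \<in> M \<longleftrightarrow> {p ! Suc i, p ! Suc (Suc i)} \<notin> M))"

definition fin_improving :: "'a set set \<Rightarrow> 'a set set \<Rightarrow> 'a list \<Rightarrow> bool" where
  "fin_improving E M p \<longleftrightarrow> fpath E p \<and> alt_fpath M p \<and> length p \<ge> 2
     \<and> hd p \<notin> supp M \<and> last p \<notin> supp M"

definition ray :: "'a set set \<Rightarrow> (nat \<Rightarrow> 'a) \<Rightarrow> bool" where
  "ray E r \<longleftrightarrow> inj r \<and> (\<forall>i. {r i, r (Suc i)} \<in> E)"

definition alt_ray :: "'a set set \<Rightarrow> (nat \<Rightarrow> 'a) \<Rightarrow> bool" where
  "alt_ray M r \<longleftrightarrow> (\<forall>i. {r i, r (Suc i)} \<in> M \<longleftrightarrow> {r (Suc i), r (Suc (Suc i))} \<notin> M)"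

definition inf_improving :: "'a set set \<Rightarrow> 'a set set \<Rightarrow> (nat \<Rightarrow> 'a) \<Rightarrow> bool" where
  "inf_improving E M r \<longleftrightarrow> ray E r \<and> alt_ray M r \<and> r 0 \<notin> supp M"

end

theory Submission
  imports Defs
begin

(* Both kinds of improving path are treated uniformly as an "improving walk": an
   injective vertex sequence f indexed by an initial segment I of the naturals
   (I = {..<n} or I = UNIV), starting outside supp M, whose i-th edge lies in M
   exactly for odd i, and which (if it ends) ends outside supp M.

   (1) Augmentation: swapping M along an improving walk yields a matching whose
       support is supp M plus f 0, so M is not of maximal support.
   (2) Alternating walks: given a matching N with supp M strictly contained in
       supp N, start at v in supp N - supp M and alternately follow N-edges and
       M-edges.  Such a walk never revisits a vertex; it either reaches, at an odd
       step, a vertex outside supp M (a finitely improving path) or runs forever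
       (an infinitely improving path). *)

lemma graph_edge_neq: "graph E \<Longrightarrow> {a, b} \<in> E \<Longrightarrow> a \<noteq> b"
  unfolding graph_def by (metis doubleton_eq_iff insert_absorb2)

lemma graph_edge_through:
  assumes "graph E" "e \<in> E" "a \<in> e"
  shows "\<exists>y. e = {a, y}"
proof -
  obtain u v where uv: "e = {u, v}" using assms(1,2) unfolding graph_def by blast
  then have "a = u \<or> a = v" using assms(3) by blast
  then show ?thesis using uv by (metis insert_commute)
qed

lemma matching_partner_unique:
  assumes "matching E X" "{a, b} \<in> X" "{a, c} \<in> X"
  shows "b = c"
proof -
  have disjoint: "\<forall>e\<in>X. \<forall>e'\<in>X. e \<noteq> e' \<longrightarrow> e \<inter> e' = {}"
    using assms(1) by (simp add: matching_def)
  have "a \<in> {a, b} \<inter> {a, c}" by simp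
  then have "{a, b} = {a, c}" using disjoint[rule_format, OF assms(2,3)] by auto
  then show ?thesis by (auto simp: doubleton_eq_iff)
qed

lemma supp_edgeI: "{a, b} \<in> X \<Longrightarrow> a \<in> supp X" "{a, b} \<in> X \<Longrightarrow> b \<in> supp X"
  by (auto simp: supp_def)

lemma matching_partner:
  assumes "graph E" "matching E X" "y \<in> supp X"
  shows "{y, SOME z. {y, z} \<in> X} \<in> X"
proof -
  obtain e where e: "e \<in> X" "y \<in> e" using assms(3) by (auto simp: supp_def)
  with assms(2) have "e \<in> E" by (auto simp: matching_def)
  with e obtain z where "{y, z} \<in> X" using graph_edge_through[OF assms(1)] by metis
  then show ?thesis by (rule someI)
qed

lemma alternation_parity:
  assumes start: "f 0 \<notin> supp M"
    and down: "\<And>i. Suc i \<in> I \<Longrightarrow> i \<in> I"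
    and alt: "\<And>i. Suc (Suc i) \<in> I \<Longrightarrow>
                ({f i, f (Suc i)} \<in> M \<longleftrightarrow> {f (Suc i), f (Suc (Suc i))} \<notin> M)"
  shows "Suc i \<in> I \<Longrightarrow> ({f i, f (Suc i)} \<in> M \<longleftrightarrow> odd i)"
proof (induction i)
  case 0
  then show ?case using start supp_edgeI(1) by fastforce
next
  case (Suc i)
  then show ?case using alt[of i] down by auto
qed

section \<open>Improving walks and augmentation\<close>

(* A uniform description of finitely and infinitely improving paths: I is an
   initial segment of the naturals with at least two elements. *)
locale improving_walk =
  fixes E M :: "'a set set" and f :: "nat \<Rightarrow> 'a" and I :: "nat set"
  assumes graph: "graph E" and matching: "matching E M"
    and down_closed: "\<And>i. Suc i \<in> I \<Longrightarrow> i \<in> I"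
    and one_edge: "Suc 0 \<in> I"
    and inj: "inj_on f I"
    and start: "f 0 \<notin> supp M"
    and edge: "\<And>i. Suc i \<in> I \<Longrightarrow> {f i, f (Suc i)} \<in> E"
    and parity: "\<And>i. Suc i \<in> I \<Longrightarrow> ({f i, f (Suc i)} \<in> M \<longleftrightarrow> odd i)"
    and finish: "\<And>k. k \<in> I \<Longrightarrow> Suc k \<notin> I \<Longrightarrow> f k \<notin> supp M"
begin

(* The walk never stops at an even index: the edge entering it would be an M-edge. *)
lemma even_index_continues:
  assumes "k \<in> I" "even k"
  shows "Suc k \<in> I"
proof (rule ccontr)
  assume stop: "Suc k \<notin> I"
  have "k \<noteq> 0" using one_edge stop by (intro notI) simp
  then obtain l where l: "k = Suc l" "odd l" using assms(2) by (cases k) auto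
  then have "{f l, f k} \<in> M" using parity[of l] assms(1) by simp
  then have "f k \<in> supp M" by (rule supp_edgeI(2))
  with finish[OF assms(1) stop] show False by contradiction
qed

(* The matching obtained by swapping M along the walk. *)
definition augmented :: "'a set set" where
  "augmented = {e \<in> M. e \<inter> f ` I = {}} \<union> {{f i, f (Suc i)} | i. Suc i \<in> I \<and> even i}"

lemma walk_edges_disjoint:
  assumes "Suc i \<in> I" "even i" "Suc j \<in> I" "even j" "i \<noteq> j"
  shows "{f i, f (Suc i)} \<inter> {f j, f (Suc j)} = {}"
proof -
  have "i \<in> I" "j \<in> I" using assms down_closed by auto
  moreover have "i \<noteq> Suc j" "Suc i \<noteq> j" using assms(2,4) by auto
  ultimately have "f i \<noteq> f j" "f i \<noteq> f (Suc j)" "f (Suc i) \<noteq> f j" "f (Suc i) \<noteq> f (Suc j)"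
    using assms(1,3,5) by (simp_all add: inj_on_eq_iff[OF inj])
  then show ?thesis by auto
qed

(* The swapped edge set is a matching: kept M-edges avoid the walk, the new
   edges are pairwise disjoint. *)
lemma augmented_matching: "matching E augmented"
proof -
  have "M \<subseteq> E" using matching by (simp add: matching_def)
  then have "augmented \<subseteq> E" using edge unfolding augmented_def by blast
  moreover have "e \<inter> e' = {}" if e: "e \<in> augmented" "e' \<in> augmented" "e \<noteq> e'" for e e'
  proof -
    have kept_disjoint: "e \<inter> e' = {}"
      if kept: "e \<in> M" "e \<inter> f ` I = {}" and other: "e' \<in> augmented" "e \<noteq> e'" for e e'
    proof (cases "e' \<in> M")
      case True
      then show ?thesis using kept other matching unfolding matching_def by blast
    next
      case False
      then obtain j where "e' = {f j, f (Suc j)}" "Suc j \<in> I"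
        using other(1) unfolding augmented_def by blast
      then show ?thesis using kept(2) down_closed by blast
    qed
    show ?thesis
    proof (cases "e \<in> M \<and> e \<inter> f ` I = {} \<or> e' \<in> M \<and> e' \<inter> f ` I = {}")
      case True
      then show ?thesis using kept_disjoint[of e e'] kept_disjoint[of e' e] e by blast
    next
      case False
      then obtain i j where "e = {f i, f (Suc i)}" "Suc i \<in> I" "even i"
        and "e' = {f j, f (Suc j)}" "Suc j \<in> I" "even j"
        using e(1,2) unfolding augmented_def by blast
      then show ?thesis using walk_edges_disjoint e(3) by blast
    qed
  qed
  ultimately show ?thesis by (simp add: matching_def)
qed

(* Every walk vertex is covered by a new edge: even positions start one, odd
   positions end one. *)
lemma walk_covered: "f ` I \<subseteq> supp augmented"
proof
  fix x assume "x \<in> f ` I"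
  then obtain k where k: "k \<in> I" "x = f k" by blast
  show "x \<in> supp augmented"
  proof (cases "even k")
    case True
    then have "{f k, f (Suc k)} \<in> augmented"
      using even_index_continues[OF k(1)] unfolding augmented_def by blast
    then show ?thesis using supp_edgeI(1) k(2) by metis
  next
    case False
    then obtain l where "k = Suc l" "even l" by (cases k) auto
    then have "{f l, f k} \<in> augmented" using k unfolding augmented_def by blast
    then show ?thesis using supp_edgeI(2) k(2) by metis
  qed
qed

(* An M-edge meeting the walk has both ends on the walk: its partner along the
   walk is the neighbour joined by an M-edge of the walk. *)
lemma matched_edge_on_walk:
  assumes e: "e \<in> M" "f k \<in> e" and k: "k \<in> I"
  shows "e \<subseteq> f ` I"
proof -
  have kM: "f k \<in> supp M" using e by (auto simp: supp_def)
  obtain y where ey: "e = {f k, y}"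
    using graph_edge_through[OF graph _ e(2)] e(1) matching by (auto simp: matching_def)
  show ?thesis
  proof (cases "even k")
    case True
    with kM start obtain l where l: "k = Suc l" "odd l" by (cases k) auto
    then have "{f k, f l} \<in> M" using parity[of l] k by (simp add: insert_commute)
    then have "y = f l" using matching_partner_unique[OF matching] e ey by blast
    then show ?thesis using ey k l down_closed by blast
  next
    case False
    then have next_in: "Suc k \<in> I" using finish k kM by blast
    then have "{f k, f (Suc k)} \<in> M" using parity False by simp
    then have "y = f (Suc k)" using matching_partner_unique[OF matching] e ey by blast
    then show ?thesis using ey k next_in by blast
  qed
qed

lemma supp_augmented_mono: "supp M \<subseteq> supp augmented"
proof
  fix x assume "x \<in> supp M"
  then obtain e where e: "e \<in> M" "x \<in> e" by (auto simp: supp_def)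
  show "x \<in> supp augmented"
  proof (cases "e \<inter> f ` I = {}")
    case True
    then have "e \<in> augmented" using e unfolding augmented_def by blast
    then show ?thesis using e by (auto simp: supp_def)
  next
    case False
    then show ?thesis using matched_edge_on_walk e walk_covered by blast
  qed
qed

(* Augmentation strictly enlarges the support, by the start vertex f 0. *)
theorem not_max_support: "\<not> max_support E M"
proof -
  have "f 0 \<in> supp augmented" using walk_covered down_closed one_edge by blast
  then have "supp M \<subset> supp augmented" using supp_augmented_mono start by blast
  then show ?thesis using augmented_matching by (auto simp: max_support_def)
qed

end

section \<open>Improving paths are improving walks, and conversely\<close>

lemma fin_improving_walk:
  assumes "graph E" "matching E M" "fin_improving E M p"
  shows "improving_walk E M ((!) p) {..<length p}"
proof -
  have path: "fpath E p" and alt: "alt_fpath M p" and len: "2 \<le> length p"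
    and ends: "hd p \<notin> supp M" "last p \<notin> supp M"
    using assms(3) unfolding fin_improving_def by auto
  have "p \<noteq> []" using len by auto
  then have start: "p ! 0 \<notin> supp M" and finish: "p ! (length p - 1) \<notin> supp M"
    using ends by (simp_all add: hd_conv_nth last_conv_nth)
  have "\<And>i. Suc (Suc i) \<in> {..<length p} \<Longrightarrow>
      ({p ! i, p ! Suc i} \<in> M \<longleftrightarrow> {p ! Suc i, p ! Suc (Suc i)} \<notin> M)"
    using alt unfolding alt_fpath_def by simp
  from alternation_parity[where I = "{..<length p}", OF start _ this]
  have parity: "Suc i \<in> {..<length p} \<Longrightarrow> ({p ! i, p ! Suc i} \<in> M \<longleftrightarrow> odd i)" for i
    by simp
  show ?thesis
  proof (rule improving_walk.intro)
    show "inj_on ((!) p) {..<length p}" using path by (simp add: fpath_def inj_on_nth)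
    show "\<And>i. Suc i \<in> {..<length p} \<Longrightarrow> {p ! i, p ! Suc i} \<in> E"
      using path by (simp add: fpath_def)
    show "\<And>k. k \<in> {..<length p} \<Longrightarrow> Suc k \<notin> {..<length p} \<Longrightarrow> p ! k \<notin> supp M"
    proof -
      fix k assume "k \<in> {..<length p}" "Suc k \<notin> {..<length p}"
      then have "k = length p - 1" by simp
      then show "p ! k \<notin> supp M" using finish by simp
    qed
  qed (use assms(1,2) len start parity in auto)
qed

lemma inf_improving_walk:
  assumes "graph E" "matching E M" "inf_improving E M r"
  shows "improving_walk E M r UNIV"
proof -
  have ray: "ray E r" and alt: "alt_ray M r" and start: "r 0 \<notin> supp M"
    using assms(3) unfolding inf_improving_def by auto
  have "\<And>i. Suc (Suc i) \<in> UNIV \<Longrightarrow>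
      ({r i, r (Suc i)} \<in> M \<longleftrightarrow> {r (Suc i), r (Suc (Suc i))} \<notin> M)"
    using alt unfolding alt_ray_def by blast
  from alternation_parity[where I = UNIV, OF start _ this]
  have parity: "{r i, r (Suc i)} \<in> M \<longleftrightarrow> odd i" for i by simp
  have "inj r" "\<And>i. {r i, r (Suc i)} \<in> E" using ray by (auto simp: ray_def)
  then show ?thesis
    using assms(1,2) start parity by (intro improving_walk.intro) simp_all
qed

lemma improving_walk_fin_improving:
  assumes "improving_walk E M f {..<n}"
  shows "fin_improving E M (map f [0..<n])"
proof -
  interpret improving_walk E M f "{..<n}" by (fact assms)
  have len: "2 \<le> n" using one_edge by simp
  have "distinct (map f [0..<n])" using inj by (simp add: distinct_map atLeast0LessThan)
  moreover have "{map f [0..<n] ! i, map f [0..<n] ! Suc i} \<in> E"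
    if "Suc i < length (map f [0..<n])" for i
    using that edge by simp
  moreover have "alt_fpath M (map f [0..<n])"
    unfolding alt_fpath_def using parity by simp
  moreover have "hd (map f [0..<n]) = f 0" "last (map f [0..<n]) = f (n - 1)"
    using len by (simp_all add: hd_map last_map)
  moreover have "f (n - 1) \<notin> supp M" using finish[of "n - 1"] len by simp
  ultimately show ?thesis using len start unfolding fin_improving_def fpath_def by auto
qed

lemma improving_walk_inf_improving:
  assumes "improving_walk E M f UNIV"
  shows "inf_improving E M f"
proof -
  interpret improving_walk E M f UNIV by (fact assms)
  show ?thesis using inj edge parity start
    unfolding inf_improving_def ray_def alt_ray_def by simp
qed

section \<open>Alternating walks between two matchings\<close>

locale alternating_walk =
  fixes E M N :: "'a set set" and f :: "nat \<Rightarrow> 'a" and n :: nat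
  assumes graph: "graph E" and matching_M: "matching E M" and matching_N: "matching E N"
    and start: "f 0 \<notin> supp M"
    and edge: "\<And>i. i < n \<Longrightarrow> {f i, f (Suc i)} \<in> (if even i then N else M)"
begin

lemma edge_in_graph: "i < n \<Longrightarrow> {f i, f (Suc i)} \<in> E"
  using edge[of i] matching_M matching_N by (auto simp: matching_def split: if_splits)

lemma partner_unique:
  "{x, y} \<in> (if even i then N else M) \<Longrightarrow> {x, z} \<in> (if even i then N else M) \<Longrightarrow> y = z"
  using matching_partner_unique[OF matching_N, of x y z] matching_partner_unique[OF matching_M, of x y z]
  by (simp split: if_splits)

(* A first repetition f i = f j cannot close up at the start vertex: the edge
   entering f j would be an M-edge at f 0, or a second N-edge at f 0. *)
lemma no_return_to_start:
  assumes j: "j \<le> n" "0 < j" and before: "\<And>a b. a < b \<Longrightarrow> b < j \<Longrightarrow> f a \<noteq> f b"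
  shows "f 0 \<noteq> f j"
proof
  assume repeat: "f 0 = f j"
  obtain m where m: "j = Suc m" using j by (cases j) auto
  have last_edge: "{f m, f 0} \<in> (if even m then N else M)" using edge[of m] j m repeat by simp
  have "m \<noteq> 0" using graph_edge_neq[OF graph edge_in_graph[of m]] repeat j m by (cases m) simp_all
  show False
  proof (cases "even m")
    case True
    have "{f 0, f m} \<in> N" "{f 0, f 1} \<in> N"
      using last_edge True edge[of 0] j m \<open>m \<noteq> 0\<close> by (simp_all add: insert_commute)
    then have "f m = f 1" using matching_partner_unique[OF matching_N] by blast
    moreover have "1 < m" using True \<open>m \<noteq> 0\<close> by presburger
    ultimately show False using before[of 1 m] m by simp
  next
    case False
    then have "f 0 \<in> supp M" using last_edge supp_edgeI(2) by simp
    then show False using start by contradiction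
  qed
qed

(* A first repetition cannot close up at an inner vertex f (Suc l) either: the
   edge entering f j has the type of one of the two walk edges at f (Suc l), so
   f (j - 1) repeats one of its neighbours, an earlier repetition. *)
lemma no_return_inside:
  assumes j: "j \<le> n" "Suc l < j" and before: "\<And>a b. a < b \<Longrightarrow> b < j \<Longrightarrow> f a \<noteq> f b"
  shows "f (Suc l) \<noteq> f j"
proof
  assume repeat: "f (Suc l) = f j"
  obtain m where m: "j = Suc m" using j by (cases j) auto
  have "Suc l \<noteq> m" using graph_edge_neq[OF graph edge_in_graph[of m]] repeat j m by auto
  then have lm: "Suc l < m" using j m by simp
  have last_edge: "{f j, f m} \<in> (if even m then N else M)"
    using edge[of m] j m by (simp add: insert_commute)
  show False
  proof (cases "even m = even l")
    case True
    have "{f j, f l} \<in> (if even m then N else M)"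
      using edge[of l] lm j m repeat True by (simp add: insert_commute)
    then have "f m = f l" using partner_unique last_edge by blast
    then show False using before[of l m] lm m by simp
  next
    case False
    then have "{f j, f (Suc (Suc l))} \<in> (if even m then N else M)"
      using edge[of "Suc l"] lm j m repeat by simp
    then have "f m = f (Suc (Suc l))" using partner_unique last_edge by blast
    moreover have "Suc (Suc l) < m" using lm False by (cases "m = Suc (Suc l)") auto
    ultimately show False using before[of "Suc (Suc l)" m] m by simp
  qed
qed

lemma injective: "j \<le> n \<Longrightarrow> i < j \<Longrightarrow> f i \<noteq> f j"
proof (induction j arbitrary: i rule: less_induct)
  case (less j)
  have before: "\<And>a b. a < b \<Longrightarrow> b < j \<Longrightarrow> f a \<noteq> f b" using less by simp
  show ?case
  proof (cases i)
    case 0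
    then show ?thesis using no_return_to_start[OF _ _ before] less.prems by simp
  next
    case (Suc l)
    then show ?thesis using no_return_inside[OF _ _ before] less.prems by simp
  qed
qed

lemma inj_on_prefix: "inj_on f {..n}"
  by (rule inj_onI) (metis atMost_iff injective linorder_neqE_nat)

(* The i-th edge is an M-edge exactly for odd i: an N-edge at even i > 0 cannot
   also be in M, since its end would be a second M-partner of f i. *)
lemma parity: "i < n \<Longrightarrow> ({f i, f (Suc i)} \<in> M \<longleftrightarrow> odd i)"
proof (cases "odd i")
  case True
  then show "i < n \<Longrightarrow> ?thesis" using edge[of i] by simp
next
  case False
  assume i: "i < n"
  show ?thesis
  proof (cases i)
    case 0
    then show ?thesis using start supp_edgeI(1) by fastforce
  next
    case (Suc l)
    then have "{f i, f l} \<in> M" using edge[of l] i False by (simp add: insert_commute)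
    moreover have "f l \<noteq> f (Suc i)" using injective[of "Suc i" l] i Suc by simp
    ultimately have "{f i, f (Suc i)} \<notin> M" using matching_partner_unique[OF matching_M] by blast
    then show ?thesis using False by simp
  qed
qed

lemma improving_prefix:
  assumes "odd n" "f n \<notin> supp M"
  shows "improving_walk E M f {..<Suc n}"
proof (rule improving_walk.intro)
  show "inj_on f {..<Suc n}" using inj_on_prefix by (simp add: lessThan_Suc_atMost)
  show "Suc 0 \<in> {..<Suc n}" using assms(1) by (cases n) auto
  show "f k \<notin> supp M" if "k \<in> {..<Suc n}" "Suc k \<notin> {..<Suc n}" for k
  proof -
    have "k = n" using that by auto
    then show ?thesis using assms(2) by simp
  qed
qed (use graph matching_M start edge_in_graph parity assms(2) in auto)

end

lemma alternating_forever:
  assumes walk: "\<And>n. alternating_walk E M N f n"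
  shows "improving_walk E M f UNIV"
proof (rule improving_walk.intro)
  interpret alternating_walk E M N f 0 by (fact walk)
  show "graph E" "matching E M" "f 0 \<notin> supp M" by (fact graph matching_M start)+
  show "inj_on f UNIV"
  proof (rule inj_onI)
    fix a b :: nat assume same: "f a = f b"
    show "a = b"
    proof (rule ccontr)
      assume "a \<noteq> b"
      then have "min a b < max a b" by simp
      then have "f (min a b) \<noteq> f (max a b)"
        using alternating_walk.injective[OF walk order_refl] by blast
      then show False using same by (simp add: min_def max_def split: if_splits)
    qed
  qed
  show "{f i, f (Suc i)} \<in> E" "{f i, f (Suc i)} \<in> M \<longleftrightarrow> odd i" for i
    using alternating_walk.edge_in_graph[OF walk] alternating_walk.parity[OF walk] by blast+
qed auto

primrec follow :: "'a set set \<Rightarrow> 'a set set \<Rightarrow> 'a \<Rightarrow> nat \<Rightarrow> 'a" where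
  "follow M N v 0 = v"
| "follow M N v (Suc i) = (SOME z. {follow M N v i, z} \<in> (if even i then N else M))"

(* If v is covered by N but not by M, and supp M \<subseteq> supp N, then following
   alternately N and M succeeds as long as the odd-indexed vertices stay in supp M:
   even-indexed vertices are then always covered by N. *)
lemma follow_alternating:
  assumes G: "graph E" and mM: "matching E M" and mN: "matching E N"
    and v: "v \<in> supp N" "v \<notin> supp M" and sub: "supp M \<subseteq> supp N"
    and covered: "\<And>j. j < n \<Longrightarrow> odd j \<Longrightarrow> follow M N v j \<in> supp M"
  shows "alternating_walk E M N (follow M N v) n"
proof -
  have "i < n \<Longrightarrow> {follow M N v i, follow M N v (Suc i)} \<in> (if even i then N else M)" for i
    using covered
  proof (induction n arbitrary: i)
    case 0
    then show ?case by simp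
  next
    case (Suc n)
    then have previous: "i < n \<Longrightarrow> {follow M N v i, follow M N v (Suc i)} \<in> (if even i then N else M)" for i
      by simp
    have "follow M N v i \<in> supp (if even i then N else M)"
    proof (cases "even i")
      case True
      show ?thesis
      proof (cases i)
        case 0
        then show ?thesis using v by simp
      next
        case (Suc m)
        then have "{follow M N v m, follow M N v i} \<in> M" using previous[of m] Suc.prems True by auto
        then have "follow M N v i \<in> supp M" by (rule supp_edgeI(2))
        then show ?thesis using sub True by auto
      qed
    next
      case False
      then show ?thesis using Suc.prems by simp
    qed
    then have "{follow M N v i, SOME z. {follow M N v i, z} \<in> (if even i then N else M)}
        \<in> (if even i then N else M)"
      using matching_partner[OF G] mM mN by (cases "even i") auto
    then show ?case by simp
  qed
  then show ?thesis using G mM mN v(2) by (intro alternating_walk.intro) simp_all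
qed

lemma larger_support_improving_walk:
  assumes G: "graph E" and mM: "matching E M" and mN: "matching E N"
    and larger: "supp M \<subset> supp N"
  shows "\<exists>f. (\<exists>n. improving_walk E M f {..<n}) \<or> improving_walk E M f UNIV"
proof -
  obtain v where v: "v \<in> supp N" "v \<notin> supp M" using larger by blast
  let ?f = "follow M N v"
  have walk: "alternating_walk E M N ?f n" if "\<And>j. j < n \<Longrightarrow> odd j \<Longrightarrow> ?f j \<in> supp M" for n
    using follow_alternating[OF G mM mN v] larger that by blast
  show ?thesis
  proof (cases "\<exists>k. odd k \<and> ?f k \<notin> supp M")
    case True
    then obtain k where k: "odd k" "?f k \<notin> supp M"
      and least: "\<And>j. j < k \<Longrightarrow> odd j \<Longrightarrow> ?f j \<in> supp M"
      using exists_least_iff[of "\<lambda>k. odd k \<and> ?f k \<notin> supp M"] by blast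
    then show ?thesis using alternating_walk.improving_prefix[OF walk[OF least]] by blast
  next
    case False
    then show ?thesis using alternating_forever[OF walk] by blast
  qed
qed

theorem lemma3p3:
  fixes E M :: "'a set set"
  assumes "graph E" and "matching E M"
  shows "max_support E M \<longleftrightarrow>
           (\<not> (\<exists>p. fin_improving E M p) \<and> \<not> (\<exists>r. inf_improving E M r))"
proof
  assume max: "max_support E M"
  have "\<not> fin_improving E M p" for p
    using improving_walk.not_max_support[OF fin_improving_walk[OF assms]] max by blast
  moreover have "\<not> inf_improving E M r" for r
    using improving_walk.not_max_support[OF inf_improving_walk[OF assms]] max by blast
  ultimately show "\<not> (\<exists>p. fin_improving E M p) \<and> \<not> (\<exists>r. inf_improving E M r)" by blast
next
  assume no_path: "\<not> (\<exists>p. fin_improving E M p) \<and> \<not> (\<exists>r. inf_improving E M r)"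
  show "max_support E M"
  proof (rule ccontr)
    assume "\<not> max_support E M"
    then obtain N where "matching E N" "supp M \<subset> supp N" by (auto simp: max_support_def)
    then obtain f where "(\<exists>n. improving_walk E M f {..<n}) \<or> improving_walk E M f UNIV"
      using larger_support_improving_walk[OF assms] by blast
    then show False
      using improving_walk_fin_improving improving_walk_inf_improving no_path by blast
  qed
qed

end
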